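(* Let $1\le p\le 2$ and $0\le\nu\le\frac{\pi}{2}$. The function $K(\theta)=\cos^p(\theta)+\cos^p(\frac{\pi}{2}-\nu-\theta)$ on the interval $0\le\theta\le\frac{\pi}{2}-\nu$ attains its minimum only at the endpoints of the interval. In particular $K(\theta)\ge 1+\sin^p\nu$ for all such $\theta$. *)

theory Defs
  imports Complex_Main
begin

text \<open>K(theta) = cos^p(theta) + cos^p(pi/2 - nu - theta). On the interval of interest
  both cosines are nonnegative, so the real power is taken with powr.\<close>
definition K :: "real \<Rightarrow> real \<Rightarrow> real \<Rightarrow> real" where
  "K p \<nu> \<theta> = cos \<theta> powr p + cos (pi/2 - \<nu> - \<theta>) powr p"

end

(* With q = p/2, A = cos^2 theta and B = cos^2 (pi/2 - nu - theta) we have K = A^q + B^q, and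
   the addition formulas give A + B = 1 + sin nu * cos (2 theta - pi/2 + nu) >= 1 + sin^2 nu.
   The pair (A, B) lies between (A + B - 1, 1) and has the same sum, so concavity of x^q yields
   A^q + B^q >= 1 + (A + B - 1)^q >= 1 + sin^p nu, which is the common value of K at both
   endpoints. In the interior the bound on A + B is strict when nu > 0; when nu = 0 the excess
   vanishes and strictness comes from x < x^q on (0,1) for p < 2. *)

theory Submission
  imports Defs "HOL-Analysis.Convex"
begin

lemma self_le_powr_of_le_one:
  fixes x q :: real
  assumes "0 \<le> x" "x \<le> 1" "q \<le> 1"
  shows "x \<le> x powr q"
  using powr_mono'[OF assms(3,1,2)] assms(1) by (simp add: powr_one)

lemma self_less_powr_of_less_one:
  fixes x q :: real
  assumes "0 < x" "x < 1" "q < 1"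
  shows "x < x powr q"
  using powr_less_mono'[OF assms] assms(1) by (simp add: powr_one)

lemma powr_eq_power2_powr_half:
  fixes x p :: real
  assumes "0 \<le> x"
  shows "x powr p = (x ^ 2) powr (p / 2)"
proof (cases "x = 0")
  case False
  with assms have "(x ^ 2) powr (p / 2) = (x powr 2) powr (p / 2)"
    by (simp add: powr_realpow)
  then show ?thesis
    by (simp add: powr_powr)
qed simp

lemma powr_concave:
  fixes q :: real
  assumes "0 < q" "q \<le> 1"
  shows "concave_on {0..} (\<lambda>x. x powr q)"
proof
  have pos: "concave_on {0<..} (\<lambda>x::real. x powr q)"
  proof (rule f''_le0_imp_concave[where f' = "\<lambda>x. q * x powr (q - 1)"
        and f'' = "\<lambda>x. q * ((q - 1) * x powr (q - 2))"])
    fix x :: real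
    assume "x \<in> {0<..}"
    then show "DERIV (\<lambda>x. x powr q) x :> q * x powr (q - 1)"
      and "DERIV (\<lambda>x. q * x powr (q - 1)) x :> q * ((q - 1) * x powr (q - 2))"
      by (auto intro!: derivative_eq_intros simp: algebra_simps)
    show "q * ((q - 1) * x powr (q - 2)) \<le> 0"
      using assms by (intro mult_nonneg_nonpos mult_nonpos_nonneg) auto
  qed simp
  fix t x y :: real
  assume t: "0 < t" "t < 1" and xy: "x \<in> {0..}" "y \<in> {0..}" "x < y"
  show "(1 - t) * x powr q + t * y powr q \<le> ((1 - t) *\<^sub>R x + t *\<^sub>R y) powr q"
  proof (cases "x = 0")
    case True
    have "t * y powr q \<le> t powr q * y powr q"
      using t assms by (intro mult_right_mono self_le_powr_of_le_one) auto
    then show ?thesis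
      using True t xy by (simp add: powr_mult)
  next
    case False
    then show ?thesis
      using concave_onD[OF pos, of t x y] t xy by auto
  qed
qed simp

lemma concave_on_sum_endpoints_le:
  fixes f :: "real \<Rightarrow> real"
  assumes "concave_on I f" "x \<in> I" "y \<in> I" "x \<le> a" "a \<le> y"
  shows "f x + f y \<le> f a + f (x + y - a)"
proof (cases "x = y")
  case False
  \<comment> \<open>\<open>a\<close> and \<open>x + y - a\<close> are mirror-image convex combinations of \<open>x\<close> and \<open>y\<close>\<close>
  define t where "t = (a - x) / (y - x)"
  have t: "0 \<le> t" "t \<le> 1" "t * (y - x) = a - x"
    using assms(4,5) False by (auto simp: t_def field_simps)
  have a: "a = (1 - t) *\<^sub>R x + t *\<^sub>R y"
    using t(3) by (simp add: algebra_simps)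
  have b: "x + y - a = (1 - (1 - t)) *\<^sub>R x + (1 - t) *\<^sub>R y"
    using t(3) by (simp add: algebra_simps)
  have "(1 - t) * f x + t * f y \<le> f a"
    unfolding a by (rule concave_onD[OF assms(1)]) (use t assms(2,3) in auto)
  moreover have "(1 - (1 - t)) * f x + (1 - t) * f y \<le> f (x + y - a)"
    unfolding b by (rule concave_onD[OF assms(1)]) (use t assms(2,3) in auto)
  ultimately show ?thesis
    by (simp add: algebra_simps)
qed (use assms(4,5) in simp)

lemma one_add_excess_powr_le:
  fixes A B q :: real
  assumes "0 < q" "q \<le> 1" "A \<le> 1" "B \<le> 1" "1 \<le> A + B"
  shows "1 + (A + B - 1) powr q \<le> A powr q + B powr q"
  using concave_on_sum_endpoints_le[OF powr_concave[OF assms(1,2)], of "A + B - 1" 1 A] assms(3-5)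
  by (simp add: add.commute)

lemma cos_power2_add_cos_diff_power2:
  fixes t a :: real
  shows "cos t ^ 2 + cos (a - t) ^ 2 = 1 + cos a * cos (2 * t - a)"
  unfolding cos_diff cos_double sin_double
  using sin_cos_squared_add[of t] sin_cos_squared_add[of a] by algebra

lemma cos_le_cos_double_diff:
  fixes t a :: real
  assumes "0 \<le> t" "t \<le> a" "a \<le> pi"
  shows "cos a \<le> cos (2 * t - a)"
proof -
  have "cos a \<le> cos \<bar>2 * t - a\<bar>"
    using assms by (intro cos_monotone_0_pi_le) auto
  then show ?thesis
    by simp
qed

lemma cos_less_cos_double_diff:
  fixes t a :: real
  assumes "0 < t" "t < a" "a \<le> pi"
  shows "cos a < cos (2 * t - a)"
proof -
  have "cos a < cos \<bar>2 * t - a\<bar>"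
    using assms by (intro cos_monotone_0_pi) auto
  then show ?thesis
    by simp
qed

lemma cos_power2_le_excess:
  fixes t a :: real
  assumes "0 \<le> t" "t \<le> a" "a \<le> pi/2"
  shows "cos a ^ 2 \<le> cos t ^ 2 + cos (a - t) ^ 2 - 1"
proof -
  have "0 \<le> cos a"
    using assms by (intro cos_ge_zero) auto
  moreover have "cos a \<le> cos (2 * t - a)"
    using assms by (intro cos_le_cos_double_diff) auto
  ultimately have "cos a * cos a \<le> cos a * cos (2 * t - a)"
    by (rule mult_left_mono[rotated])
  then show ?thesis
    using cos_power2_add_cos_diff_power2[of t a] by (simp add: power2_eq_square)
qed

lemma cos_power2_less_excess:
  fixes t a :: real
  assumes "0 < t" "t < a" "a < pi/2"
  shows "cos a ^ 2 < cos t ^ 2 + cos (a - t) ^ 2 - 1"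
proof -
  have "0 < cos a"
    using assms by (intro cos_gt_zero) auto
  moreover have "cos a < cos (2 * t - a)"
    using assms by (intro cos_less_cos_double_diff) auto
  ultimately have "cos a * cos a < cos a * cos (2 * t - a)"
    by (rule mult_strict_left_mono[rotated])
  then show ?thesis
    using cos_power2_add_cos_diff_power2[of t a] by (simp add: power2_eq_square)
qed

lemma K_endpoints:
  "K p \<nu> 0 = 1 + sin \<nu> powr p"
  "K p \<nu> (pi/2 - \<nu>) = 1 + sin \<nu> powr p"
  by (simp_all add: K_def cos_diff)

lemma K_eq_powr_cos_power2:
  assumes "0 \<le> \<nu>" "0 \<le> \<theta>" "\<theta> \<le> pi/2 - \<nu>"
  shows "K p \<nu> \<theta> = (cos \<theta> ^ 2) powr (p/2) + (cos (pi/2 - \<nu> - \<theta>) ^ 2) powr (p/2)"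
proof -
  have "0 \<le> cos \<theta>" "0 \<le> cos (pi/2 - \<nu> - \<theta>)"
    using assms by (auto intro!: cos_ge_zero)
  then show ?thesis
    unfolding K_def by (metis powr_eq_power2_powr_half)
qed

lemma K_ge_one_add_excess_powr:
  assumes "0 < p" "p \<le> 2" "0 \<le> \<nu>" "0 \<le> \<theta>" "\<theta> \<le> pi/2 - \<nu>"
  shows "1 + (cos \<theta> ^ 2 + cos (pi/2 - \<nu> - \<theta>) ^ 2 - 1) powr (p/2) \<le> K p \<nu> \<theta>"
proof -
  have "1 \<le> cos \<theta> ^ 2 + cos (pi/2 - \<nu> - \<theta>) ^ 2"
    using cos_power2_le_excess[of \<theta> "pi/2 - \<nu>"] zero_le_power2[of "cos (pi/2 - \<nu>)"] assms
    by linarith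
  from one_add_excess_powr_le[OF _ _ _ _ this, of "p/2"] show ?thesis
    using assms by (simp add: K_eq_powr_cos_power2 abs_square_le_1)
qed

lemma sin_powr_eq_cos_power2_powr:
  assumes "0 \<le> \<nu>" "\<nu> \<le> pi"
  shows "sin \<nu> powr p = (cos (pi/2 - \<nu>) ^ 2) powr (p/2)"
  using assms powr_eq_power2_powr_half[OF sin_ge_zero] by (simp add: cos_diff)

lemma K_ge_sin_powr:
  assumes "0 < p" "p \<le> 2" "0 \<le> \<nu>" "\<theta> \<in> {0..pi/2 - \<nu>}"
  shows "1 + sin \<nu> powr p \<le> K p \<nu> \<theta>"
proof -
  have "sin \<nu> powr p = (cos (pi/2 - \<nu>) ^ 2) powr (p/2)"
    using assms by (intro sin_powr_eq_cos_power2_powr) auto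
  also have "\<dots> \<le> (cos \<theta> ^ 2 + cos (pi/2 - \<nu> - \<theta>) ^ 2 - 1) powr (p/2)"
    using assms by (intro powr_mono2 cos_power2_le_excess) auto
  finally show ?thesis
    using K_ge_one_add_excess_powr[of p \<nu> \<theta>] assms by auto
qed

lemma K_gt_sin_powr:
  assumes "0 < p" "p \<le> 2" "0 \<le> \<nu>" "\<theta> \<in> {0<..<pi/2 - \<nu>}" "\<not> (p = 2 \<and> \<nu> = 0)"
  shows "1 + sin \<nu> powr p < K p \<nu> \<theta>"
proof (cases "\<nu> = 0")
  case False
  have "sin \<nu> powr p = (cos (pi/2 - \<nu>) ^ 2) powr (p/2)"
    using assms by (intro sin_powr_eq_cos_power2_powr) auto
  also have "\<dots> < (cos \<theta> ^ 2 + cos (pi/2 - \<nu> - \<theta>) ^ 2 - 1) powr (p/2)"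
    using assms False by (intro powr_less_mono2 cos_power2_less_excess) auto
  finally show ?thesis
    using K_ge_one_add_excess_powr[of p \<nu> \<theta>] assms by auto
next
  case True
  \<comment> \<open>the excess vanishes; strictness comes from \<open>x < x powr (p/2)\<close> on \<open>(0,1)\<close> instead\<close>
  define A where "A = cos \<theta> ^ 2"
  have "0 < cos \<theta>" "cos \<theta> < 1"
    using assms True by (auto intro!: cos_gt_zero cos_monotone_0_pi[where y = 0, simplified])
  then have A: "0 < A" "A < 1"
    by (auto simp: A_def power_less_one_iff)
  have "p/2 < 1"
    using assms True by auto
  have "cos (pi/2 - \<nu> - \<theta>) ^ 2 = 1 - A"
    using True by (simp add: A_def cos_diff sin_squared_eq)
  then have "K p \<nu> \<theta> = A powr (p/2) + (1 - A) powr (p/2)"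
    using assms True by (simp add: K_eq_powr_cos_power2 A_def)
  moreover have "A < A powr (p/2)" "1 - A < (1 - A) powr (p/2)"
    using A \<open>p/2 < 1\<close> by (auto intro: self_less_powr_of_less_one)
  ultimately show ?thesis
    using True by simp
qed

theorem lemma2p4:
  fixes p \<nu> :: real
  assumes "1 \<le> p" and "p \<le> 2" and "0 \<le> \<nu>" and "\<nu> \<le> pi/2"
  shows "(\<not> (p = 2 \<and> \<nu> = 0) \<longrightarrow>
           (\<forall>\<theta>\<in>{0<..<pi/2 - \<nu>}. K p \<nu> \<theta> > K p \<nu> 0 \<and> K p \<nu> \<theta> > K p \<nu> (pi/2 - \<nu>)))
       \<and> (\<forall>\<theta>\<in>{0..pi/2 - \<nu>}. K p \<nu> \<theta> \<ge> K p \<nu> 0 \<and> K p \<nu> \<theta> \<ge> K p \<nu> (pi/2 - \<nu>))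
       \<and> (\<forall>\<theta>\<in>{0..pi/2 - \<nu>}. K p \<nu> \<theta> \<ge> 1 + sin \<nu> powr p)"
  using K_ge_sin_powr[of p \<nu>] K_gt_sin_powr[of p \<nu>] assms
  unfolding K_endpoints by auto

end
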